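(* Let $n\in\mathbb{C}\setminus\{0,-\tfrac12,-1\}$ and put $N_4=n+\tfrac12$. For $\lambda,\mu,\lambda',\mu'\in\mathbb{C}$ set $\delta=\mu-\lambda$, $\gamma^{1/2}=\sqrt3(\lambda+\mu-\tfrac12)$, $\gamma=(\gamma^{1/2})^2$, and similarly $\delta',\gamma'$ from $(\lambda',\mu')$. Define $f_0(\gamma,\delta)=(\delta-N_4+\tfrac12)(\delta-N_4-\tfrac12)\,\gamma^{1/2}$ and $f_1(\gamma,\delta)=(\delta-N_4)\bigl(\gamma-3N_4\delta-\tfrac34\bigr)$. (i) $\mathrm{SQ}^{\delta-n,0,4}_{\lambda,\mu}\cong\mathrm{SQ}^{\delta'-n,0,4}_{\lambda',\mu'}$ if and only if $f_0(\gamma,\delta)$ and $f_0(\gamma',\delta')$ are either both zero or both nonzero. The equivalence class where $f_0$ vanishes is that of $\mathcal{F}_n\oplus\mathcal{F}^\Pi_{n+1/2}\oplus\mathcal{F}_{n+1}\oplus\mathcal{F}^\Pi_{n+3/2}$. (ii) $\mathrm{SQ}^{\delta-n,1,4}_{\lambda,\mu}\cong\mathrm{SQ}^{\delta'-n,1,4}_{\lambda',\mu'}$ if and only if $f_1(\gamma,\delta)$ and $f_1(\gamma',\delta')$ are either both zero or both nonzero. The equivalence class where $f_1$ vanishes is that of $\mathcal{F}^\Pi_n\oplus\mathcal{F}_{n+1/2}\oplus\mathcal{F}^\Pi_{n+1}\oplus\mathcal{F}_{n+3/2}$. (iii) $\mathrm{SQ}^{\delta-n,0,4}_{\lambda,\mu}\cong\mathrm{SQ}^{\delta'-n,1,4}_{\lambda',\mu'}$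 if and only if $f_0(\gamma,\delta)$ and $f_1(\gamma',\delta')$ are either both zero or both nonzero.
   Context: Work over $\mathbb{C}$ on the superline $\mathbb{R}^{1|1}$ in the polynomial category. Let $\mathbb{C}[x,\xi]$ be the polynomial superalgebra with even coordinate $x$ and odd coordinate $\xi$ ($\xi^2=0$), $D=\partial_\xi+\xi\partial_x$, $\bar D=\partial_\xi-\xi\partial_x$. For $F\in\mathbb{C}[x,\xi]$ put $X_F=F\partial_x+\tfrac12 D(F)\bar D$; $\mathcal{K}=\{X_F\}$ is the Lie superalgebra of contact vector fields. For a superspace $V$, $V^\Pi$ is $V$ with parity reversed and $V^{p\Pi}$ is $V$ for $p$ even, $V^\Pi$ for $p$ odd. For $\nu\in\mathbb{C}$, $\mathcal{F}_\nu=\alpha^\nu\mathbb{C}[x,\xi]$ ($\alpha^\nu$ formal, even) with action $L_\nu(X_F)(\alpha^\nu G)=\alpha^\nu(X_F(G)+\nu\,\partial_x(F)\,G)$. For $z\in\mathbb{C}$ let $\bar D^z_0=e^{i\pi z/2}\partial_x^{z/2}$ (even), $\bar D^z_1=e^{i\pi(z-1)/2}\partial_x^{(z-1)/2}\bar D$ (odd). For $\lambda,\mu,k\in\mathbb{C}$, $p\in\mathbb{Z}_2$, $\delta=\mu-\lambda$: $\Psi^{k,p}_{\lambda,\mu}=\{\alpha^{\delta}\sum_{j\in\mathbb{N}}T_{2k-j}\bar D^{2k-j}_{p+(j\bmod 2)}:T_{2k-j}\in\mathbb{C}[x,\xi]\}$ (formal series), with composition defined by $\bar D^{z'}_{p'}\circ\bar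 D^z_p=\bar D^{z+z'}_{p+p'}$, $[\bar D,\partial_x^z]=0$, $\partial_x^z\circ F=\sum_{j}\binom{z}{j}\partial_x^j(F)\circ\partial_x^{z-j}$, and $\mathcal{K}$-action $L_{\lambda,\mu}(X)(T)=L_\mu(X)\circ T-(-1)^{|X||T|}T\circ L_\lambda(X)$. For $l\in\mathbb{Z}^+$, $\mathrm{SQ}^{k,p,l}_{\lambda,\mu}=\Psi^{k,p}_{\lambda,\mu}/\Psi^{k-l/2,\,p+l}_{\lambda,\mu}$, a $\mathcal{K}$-module with composition factors $\mathcal{F}^{p\Pi}_{\delta-k},\mathcal{F}^{(p+1)\Pi}_{\delta-k+1/2},\dots,\mathcal{F}^{(p+l-1)\Pi}_{\delta-k+(l-1)/2}$. Here $\cong$ denotes $\mathcal{K}$-equivalence (of any parity). *)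

theory Defs
  imports Complex_Main "HOL-Computational_Algebra.Polynomial"
begin

text \<open>A superfunction a + xi b (a, b in C[x]) is represented by the pair (a, b).\<close>
type_synonym sf = "complex poly \<times> complex poly"

definition sf_add :: "sf \<Rightarrow> sf \<Rightarrow> sf" where
  "sf_add F G = (fst F + fst G, snd F + snd G)"

definition sf_scale :: "complex \<Rightarrow> sf \<Rightarrow> sf" where
  "sf_scale c F = (smult c (fst F), smult c (snd F))"

definition sf_neg :: "sf \<Rightarrow> sf" where
  "sf_neg F = sf_scale (-1) F"

text \<open>(a + xi b)(c + xi d) = ac + xi (ad + bc), since xi^2 = 0.\<close>
definition sf_mult :: "sf \<Rightarrow> sf \<Rightarrow> sf" where
  "sf_mult F G = (fst F * fst G, fst F * snd G + snd F * fst G)"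

definition sf_zero :: sf where "sf_zero = (0, 0)"

definition sf_dx :: "sf \<Rightarrow> sf" where
  "sf_dx F = (pderiv (fst F), pderiv (snd F))"

text \<open>D = partial_xi + xi partial_x, Dbar = partial_xi - xi partial_x\<close>
definition sf_D :: "sf \<Rightarrow> sf" where
  "sf_D F = (snd F, pderiv (fst F))"

definition sf_Dbar :: "sf \<Rightarrow> sf" where
  "sf_Dbar F = (snd F, - pderiv (fst F))"

definition sf_sigma :: "sf \<Rightarrow> sf" where
  "sf_sigma F = (fst F, - snd F)"

definition sf_part :: "nat \<Rightarrow> sf \<Rightarrow> sf" where
  "sf_part q F = (if even q then (fst F, 0) else (0, snd F))"

definition sf_hom :: "nat \<Rightarrow> sf \<Rightarrow> bool" where
  "sf_hom q F \<longleftrightarrow> (if even q then snd F = 0 else fst F = 0)"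

definition Ldens :: "complex \<Rightarrow> sf \<Rightarrow> sf \<Rightarrow> sf" where
  "Ldens nu F G = sf_add (sf_add (sf_mult F (sf_dx G))
                      (sf_scale (1/2) (sf_mult (sf_D F) (sf_Dbar G))))
                      (sf_scale nu (sf_mult (sf_dx F) G))"

text \<open>A symbol of leading order a and parity index q is a sequence A :: nat => sf,
  standing for sum_j A j Dbar^(a-j)_(q+j).
  cbar z s G m is the coefficient c_m in
  Dbar^z_s o G = sum_m c_m Dbar^(z-m)_(s+m).\<close>
definition cbar :: "complex \<Rightarrow> nat \<Rightarrow> sf \<Rightarrow> nat \<Rightarrow> sf" where
  "cbar z s G m =
    (let t = m div 2 in
     if even s then
       (if even m then sf_scale ((z/2 gchoose t) * (-1)^t) ((sf_dx ^^ t) G) else sf_zero)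
     else
       (if even m then sf_scale (((z-1)/2 gchoose t) * (-1)^t) ((sf_dx ^^ t) (sf_sigma G))
        else sf_scale (((z-1)/2 gchoose t) * (-1)^t) ((sf_dx ^^ t) (sf_Dbar G))))"

text \<open>Composition (sum_i A i Dbar^(a-i)_(q+i)) o (sum_l B l Dbar^(b-l)_(r+l)); the result
  has leading order a+b and parity index q+r; this is its n-th coefficient.\<close>
definition sym_comp :: "complex \<Rightarrow> nat \<Rightarrow> (nat \<Rightarrow> sf) \<Rightarrow> complex \<Rightarrow> (nat \<Rightarrow> sf) \<Rightarrow> nat \<Rightarrow> sf" where
  "sym_comp a q A b B n =
     foldr sf_add
       (concat (map (\<lambda>i. map (\<lambda>m. sf_mult (A i) (cbar (a - of_nat i) (q + i) (B (n - i - m)) m))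
                        [0..<Suc (n - i)]) [0..<Suc n])) sf_zero"

text \<open>Symbol of L_nu(X_F) = F partial_x + 1/2 D(F) Dbar + nu F' as a symbol of order 2,
  parity index 0 (partial_x = - Dbar^2_0, Dbar = Dbar^1_1, 1 = Dbar^0_0).\<close>
definition Lsym :: "complex \<Rightarrow> sf \<Rightarrow> nat \<Rightarrow> sf" where
  "Lsym nu F j = (if j = 0 then sf_neg F
                  else if j = 1 then sf_scale (1/2) (sf_D F)
                  else if j = 2 then sf_scale nu (sf_dx F)
                  else sf_zero)"

type_synonym vec = "nat \<Rightarrow> sf"

definition V4 :: "vec set" where
  "V4 = {v. \<forall>j\<ge>4. v j = sf_zero}"

text \<open>A module is given by a parity shift eps (component j of an element of parity r
  has parity r + eps j) and an action of the contact field X_F (F in C[x,xi]).\<close>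
type_synonym kmod = "(nat \<Rightarrow> nat) \<times> (sf \<Rightarrow> vec \<Rightarrow> vec)"

definition vec_hom :: "(nat \<Rightarrow> nat) \<Rightarrow> nat \<Rightarrow> vec \<Rightarrow> bool" where
  "vec_hom eps r v \<longleftrightarrow> (\<forall>j. sf_hom (r + eps j) (v j))"

text \<open>Raw action on SQ for F and T homogeneous; s = 1 iff both are odd (sign).
  L_mu(X) o T - (-1)^(|X||T|) T o L_lambda(X) has order 2k+2, its first two coefficients
  vanish; the remaining ones are the coefficients of an element of Psi^{k,p}.\<close>
definition SQraw :: "complex \<Rightarrow> complex \<Rightarrow> complex \<Rightarrow> nat \<Rightarrow> sf \<Rightarrow> vec \<Rightarrow> nat \<Rightarrow> vec" where
  "SQraw lam mu k p F T s =
    (\<lambda>j. if j < 4 then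
          sf_add (sym_comp 2 0 (Lsym mu F) (2*k) T (j+2))
                 (sf_scale (- ((-1)^s)) (sym_comp (2*k) p T 2 (Lsym lam F) (j+2)))
         else sf_zero)"

definition vadd :: "vec \<Rightarrow> vec \<Rightarrow> vec" where
  "vadd u v = (\<lambda>j. sf_add (u j) (v j))"

definition vscale :: "complex \<Rightarrow> vec \<Rightarrow> vec" where
  "vscale c v = (\<lambda>j. sf_scale c (v j))"

text \<open>Action of K on SQ^{k,p,4}_{lambda,mu} = Psi^{k,p}/Psi^{k-2,p}, with elements
  represented by (T_{2k}, T_{2k-1}, T_{2k-2}, T_{2k-3}); extended linearly from
  homogeneous parts.\<close>
definition SQact :: "complex \<Rightarrow> complex \<Rightarrow> complex \<Rightarrow> nat \<Rightarrow> sf \<Rightarrow> vec \<Rightarrow> vec" where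
  "SQact lam mu k p F T =
    (let F0 = sf_part 0 F; F1 = sf_part 1 F;
         Te = (\<lambda>j. if j < 4 then sf_part (p + j) (T j) else sf_zero);
         To = (\<lambda>j. if j < 4 then sf_part (p + j + 1) (T j) else sf_zero)
     in vadd (vadd (SQraw lam mu k p F0 Te 0) (SQraw lam mu k p F0 To 0))
             (vadd (SQraw lam mu k p F1 Te 0) (SQraw lam mu k p F1 To 1)))"

text \<open>SQ^{k,p,4}_{lambda,mu}: j-th component carries F^{(p+j)Pi}_{delta-k+j/2}.\<close>
definition SQ4 :: "complex \<Rightarrow> complex \<Rightarrow> complex \<Rightarrow> nat \<Rightarrow> kmod" where
  "SQ4 lam mu k p = ((\<lambda>j. (p + j) mod 2), SQact lam mu k p)"

definition Dsum4 :: "(nat \<Rightarrow> complex) \<Rightarrow> (nat \<Rightarrow> nat) \<Rightarrow> kmod" where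
  "Dsum4 nu eps = (eps, (\<lambda>F v j. if j < 4 then Ldens (nu j) F (v j) else sf_zero))"

definition kequiv :: "kmod \<Rightarrow> kmod \<Rightarrow> bool" where
  "kequiv M M' \<longleftrightarrow>
    (\<exists>\<phi> s. bij_betw \<phi> V4 V4
       \<and> (\<forall>u\<in>V4. \<forall>v\<in>V4. \<phi> (vadd u v) = vadd (\<phi> u) (\<phi> v))
       \<and> (\<forall>c. \<forall>v\<in>V4. \<phi> (vscale c v) = vscale c (\<phi> v))
       \<and> (\<forall>r. \<forall>v\<in>V4. vec_hom (fst M) r v \<longrightarrow> vec_hom (fst M') (r + s) (\<phi> v))
       \<and> (\<forall>F. \<forall>v\<in>V4. \<phi> (snd M F v) = snd M' F (\<phi> v)))"

definition gamma_half :: "complex \<Rightarrow> complex \<Rightarrow> complex" where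
  "gamma_half lam mu = complex_of_real (sqrt 3) * (lam + mu - 1/2)"

definition gamma :: "complex \<Rightarrow> complex \<Rightarrow> complex" where
  "gamma lam mu = (gamma_half lam mu)^2"

definition N4 :: "complex \<Rightarrow> complex" where
  "N4 n = n + 1/2"

definition f0 :: "complex \<Rightarrow> complex \<Rightarrow> complex \<Rightarrow> complex" where
  "f0 n lam mu = (let d = mu - lam in (d - N4 n + 1/2) * (d - N4 n - 1/2) * gamma_half lam mu)"

definition f1 :: "complex \<Rightarrow> complex \<Rightarrow> complex \<Rightarrow> complex" where
  "f1 n lam mu = (let d = mu - lam in (d - N4 n) * (gamma lam mu - 3 * N4 n * d - 3/4))"

end

theory Submission
  imports Defs
begin

(* Written on the coefficients (T_2k, T_2k-1, T_2k-2, T_2k-3), the action on SQ^{delta-n,p,4} is the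
  direct sum of F_n, F_(n+1/2), F_(n+1), F_(n+3/2) (parities shifted by p) deformed by the cocycles
  coc 1, coc 2, coc 3, with coefficients A, B, C between adjacent slots, 2AB, 2BC two slots apart
  and X from the first slot to the last.  When n, n + 1/2 and n + 1 are nonzero, a unitriangular
  change of coordinates built from D, D^2 and D^3 removes A, B, C and leaves the single invariant
  X - 4ABC/(2n+1), a nonzero multiple of f0 (p = 0) resp. f1 (p = 1).  Rescaling the first slot
  normalises it to 0 or 1, and the parity shift is irrelevant because odd equivalences are allowed.
  The two normal forms are inequivalent: an equivalence maps the constant 1 in F_n, a lowest weight
  vector, to a lowest weight vector of the split module, i.e. a multiple of 1; there the operator
  2n(2n+1) X_(x^3) - 3n X_(x^2) X_(x^2) annihilates it, while in the non-split module it does not. *)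

lemmas sf_defs = sf_add_def sf_scale_def sf_neg_def sf_mult_def sf_zero_def sf_dx_def
  sf_D_def sf_Dbar_def sf_sigma_def sf_part_def Ldens_def

lemmas sf_pderiv_simps = sf_defs prod_eq_iff pderiv_add pderiv_diff pderiv_minus pderiv_smult
  pderiv_mult

lemma sf_hom_cong: "even q = even q' \<Longrightarrow> sf_hom q X = sf_hom q' X"
  by (simp add: sf_hom_def)

lemma sf_part_add: "sf_add (sf_part q X) (sf_part (Suc q) X) = X"
  by (simp add: sf_defs)

lemma sf_hom_add_cancel: "sf_hom q (sf_add X Y) \<Longrightarrow> sf_hom q X \<Longrightarrow> sf_hom q Y"
  by (auto simp: sf_hom_def sf_defs split: if_splits)

lemma sf_hom_Suc_zero: "sf_hom q X \<Longrightarrow> sf_hom (Suc q) X \<Longrightarrow> X = sf_zero"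
  by (cases X) (auto simp: sf_hom_def sf_defs split: if_splits)

lemma sf_add_neg_cancel:
  "sf_add (sf_add X (sf_neg Y)) Y = X"
  "sf_add (sf_add X Y) (sf_neg Y) = X"
  by (simp_all add: sf_defs)

lemma sf_scale_scale: "sf_scale a (sf_scale b X) = sf_scale (a * b) X"
  by (simp add: sf_scale_def)

lemma sf_scale_1: "sf_scale 1 X = X"
  by (simp add: sf_scale_def)

section \<open>Equivalence of modules\<close>

definition zvec :: vec where
  "zvec = (\<lambda>_. sf_zero)"

lemma zvec_V4: "zvec \<in> V4"
  by (simp add: V4_def zvec_def)

lemma vscale_0: "vscale 0 v = zvec"
  by (simp add: vscale_def zvec_def sf_defs)

lemma vadd_V4: "u \<in> V4 \<Longrightarrow> v \<in> V4 \<Longrightarrow> vadd u v \<in> V4"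
  by (simp add: V4_def vadd_def sf_defs)

lemma vscale_V4: "v \<in> V4 \<Longrightarrow> vscale c v \<in> V4"
  by (simp add: V4_def vscale_def sf_defs)

lemma vec_hom_cong: "even q = even q' \<Longrightarrow> vec_hom e q v = vec_hom e q' v"
  by (simp add: vec_hom_def sf_hom_def even_add)

lemma vec_hom_decompose:
  assumes "v \<in> V4"
  obtains va vb where "v = vadd va vb" "va \<in> V4" "vb \<in> V4"
    "vec_hom e r va" "vec_hom e (Suc r) vb"
proof
  show "v = vadd (\<lambda>j. sf_part (r + e j) (v j)) (\<lambda>j. sf_part (Suc (r + e j)) (v j))"
    by (simp add: vadd_def sf_part_add)
qed (use assms in \<open>auto simp: V4_def vec_hom_def sf_hom_def sf_defs\<close>)

lemma vec_hom_add_cancel: "vec_hom e r (vadd u w) \<Longrightarrow> vec_hom e r u \<Longrightarrow> vec_hom e r w"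
  unfolding vec_hom_def vadd_def using sf_hom_add_cancel by blast

lemma vec_hom_Suc_zvec: "vec_hom e r v \<Longrightarrow> vec_hom e (Suc r) v \<Longrightarrow> v = zvec"
  unfolding vec_hom_def zvec_def using sf_hom_Suc_zero by fastforce

definition kiso :: "(vec \<Rightarrow> vec) \<Rightarrow> nat \<Rightarrow> kmod \<Rightarrow> kmod \<Rightarrow> bool" where
  "kiso \<phi> s M M' \<longleftrightarrow> bij_betw \<phi> V4 V4
     \<and> (\<forall>u\<in>V4. \<forall>v\<in>V4. \<phi> (vadd u v) = vadd (\<phi> u) (\<phi> v))
     \<and> (\<forall>c. \<forall>v\<in>V4. \<phi> (vscale c v) = vscale c (\<phi> v))
     \<and> (\<forall>r. \<forall>v\<in>V4. vec_hom (fst M) r v \<longrightarrow> vec_hom (fst M') (r + s) (\<phi> v))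
     \<and> (\<forall>F. \<forall>v\<in>V4. \<phi> (snd M F v) = snd M' F (\<phi> v))"

lemma kisoD:
  assumes "kiso \<phi> s M M'"
  shows "bij_betw \<phi> V4 V4"
    and "u \<in> V4 \<Longrightarrow> v \<in> V4 \<Longrightarrow> \<phi> (vadd u v) = vadd (\<phi> u) (\<phi> v)"
    and "v \<in> V4 \<Longrightarrow> \<phi> (vscale c v) = vscale c (\<phi> v)"
    and "v \<in> V4 \<Longrightarrow> vec_hom (fst M) r v \<Longrightarrow> vec_hom (fst M') (r + s) (\<phi> v)"
    and "v \<in> V4 \<Longrightarrow> \<phi> (snd M F v) = snd M' F (\<phi> v)"
  using assms unfolding kiso_def by blast+

lemma kequiv_iff_kiso: "kequiv M M' \<longleftrightarrow> (\<exists>\<phi> s. kiso \<phi> s M M')"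
  by (simp add: kequiv_def kiso_def)

(* kequiv only constrains the maps on V4, so its symmetry needs the action to preserve V4. *)
definition kmod_closed :: "kmod \<Rightarrow> bool" where
  "kmod_closed M \<longleftrightarrow> (\<forall>F. \<forall>v\<in>V4. snd M F v \<in> V4)"

lemma kmod_closedD: "kmod_closed M \<Longrightarrow> v \<in> V4 \<Longrightarrow> snd M F v \<in> V4"
  unfolding kmod_closed_def by blast

lemma kiso_zvec: "kiso \<phi> s M M' \<Longrightarrow> \<phi> zvec = zvec"
  using kisoD(3)[OF _ zvec_V4, of \<phi> s M M' 0] by (simp add: vscale_0)

lemma kiso_V4: "kiso \<phi> s M M' \<Longrightarrow> v \<in> V4 \<Longrightarrow> \<phi> v \<in> V4"
  using bij_betwE unfolding kiso_def by blast

lemma kiso_comp: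
  assumes f: "kiso f s M1 M2" and g: "kiso g t M2 M3"
  shows "kiso (g \<circ> f) (s + t) M1 M3"
  unfolding kiso_def
proof (intro conjI ballI allI impI)
  show "bij_betw (g \<circ> f) V4 V4"
    using kisoD(1)[OF f] kisoD(1)[OF g] by (rule bij_betw_trans)
next
  fix r v assume "v \<in> V4" "vec_hom (fst M1) r v"
  then have "vec_hom (fst M3) (r + s + t) (g (f v))"
    using kisoD(4)[OF g kiso_V4[OF f]] kisoD(4)[OF f] by blast
  then show "vec_hom (fst M3) (r + (s + t)) ((g \<circ> f) v)"
    by (simp add: add.assoc)
qed (simp_all add: kisoD(2,3,5)[OF f] kisoD(2,3,5)[OF g] kiso_V4[OF f])

lemma kiso_reflects_hom:
  assumes f: "kiso f s M M'" and v: "v \<in> V4" and hom: "vec_hom (fst M') (r + s) (f v)"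
  shows "vec_hom (fst M) r v"
proof -
  obtain va vb where split: "v = vadd va vb" "va \<in> V4" "vb \<in> V4"
    and hom_a: "vec_hom (fst M) r va" and hom_b: "vec_hom (fst M) (Suc r) vb"
    using vec_hom_decompose[OF v] .
  have f_split: "f v = vadd (f va) (f vb)"
    using kisoD(2)[OF f split(2,3)] split(1) by simp
  have f_hom_a: "vec_hom (fst M') (r + s) (f va)"
    using kisoD(4)[OF f split(2) hom_a] .
  have "vec_hom (fst M') (Suc r + s) (f vb)"
    using kisoD(4)[OF f split(3) hom_b] .
  moreover have "vec_hom (fst M') (r + s) (f vb)"
    using vec_hom_add_cancel[OF _ f_hom_a] hom f_split by simp
  ultimately have "f vb = zvec"
    by (intro vec_hom_Suc_zvec) simp_all
  then have "f vb = f zvec"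
    using kiso_zvec[OF f] by simp
  then have "vb = zvec"
    using kisoD(1)[OF f] split(3) zvec_V4 unfolding bij_betw_def by (blast dest: inj_onD)
  then have "v = va"
    using split by (simp add: vadd_def zvec_def sf_defs)
  with hom_a show ?thesis by simp
qed

lemma kiso_inv:
  assumes f: "kiso f s M M'" and closed: "kmod_closed M"
  shows "kiso (inv_into V4 f) s M' M"
proof -
  let ?g = "inv_into V4 f"
  have bij: "bij_betw f V4 V4" and g_bij: "bij_betw ?g V4 V4"
    using f bij_betw_inv_into by (auto dest: kisoD)
  have g_V4: "?g w \<in> V4" if "w \<in> V4" for w
    using bij_betwE[OF g_bij] that by blast
  have fg: "f (?g w) = w" if "w \<in> V4" for w
    using bij that by (metis bij_betw_def f_inv_into_f)
  have g_eqI: "?g w = v" if "v \<in> V4" "f v = w" for v w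
    using bij that by (metis bij_betw_inv_into_left)
  show ?thesis
    unfolding kiso_def
  proof (intro conjI ballI allI impI)
    show "bij_betw ?g V4 V4" by (rule g_bij)
  next
    fix u w assume "u \<in> V4" "w \<in> V4"
    then show "?g (vadd u w) = vadd (?g u) (?g w)"
      by (intro g_eqI) (simp_all add: vadd_V4 g_V4 fg kisoD(2)[OF f])
  next
    fix c w assume "w \<in> V4"
    then show "?g (vscale c w) = vscale c (?g w)"
      by (intro g_eqI) (simp_all add: vscale_V4 g_V4 fg kisoD(3)[OF f])
  next
    fix F w assume "w \<in> V4"
    then show "?g (snd M' F w) = snd M F (?g w)"
      by (intro g_eqI) (simp_all add: g_V4 fg kisoD(5)[OF f] kmod_closedD[OF closed])
  next
    fix r w assume w: "w \<in> V4" and hom: "vec_hom (fst M') r w"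
    have "even (r + s + s) = even r"
      by presburger
    with hom have "vec_hom (fst M') (r + s + s) w"
      using vec_hom_cong by blast
    then show "vec_hom (fst M) (r + s) (?g w)"
      using kiso_reflects_hom[OF f g_V4[OF w], of "r + s"] fg[OF w] by simp
  qed
qed

lemma kequiv_refl: "kequiv M M"
  unfolding kequiv_def by (intro exI[of _ id] exI[of _ 0]) (simp add: bij_betw_id)

lemma kequiv_trans: "kequiv M1 M2 \<Longrightarrow> kequiv M2 M3 \<Longrightarrow> kequiv M1 M3"
  unfolding kequiv_iff_kiso using kiso_comp by blast

lemma kequiv_sym: "kequiv M M' \<Longrightarrow> kmod_closed M \<Longrightarrow> kequiv M' M"
  unfolding kequiv_iff_kiso using kiso_inv by blast

lemma kequiv_transfer:
  assumes NM: "kequiv N M" and NM': "kequiv N' M'" and "kmod_closed N" "kmod_closed N'"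
  shows "kequiv M M' \<longleftrightarrow> kequiv N N'"
proof
  have "kequiv M' N'"
    using NM' assms(4) by (rule kequiv_sym)
  moreover assume "kequiv M M'"
  ultimately show "kequiv N N'"
    using NM by (blast intro: kequiv_trans)
next
  have "kequiv M N"
    using NM assms(3) by (rule kequiv_sym)
  moreover assume "kequiv N N'"
  ultimately show "kequiv M M'"
    using NM' by (blast intro: kequiv_trans)
qed

definition parity_shift :: "nat \<Rightarrow> nat \<Rightarrow> nat" where
  "parity_shift p = (\<lambda>j. (p + j) mod 2)"

lemma vec_hom_parity_shift: "vec_hom (parity_shift p) r v \<longleftrightarrow> (\<forall>j. sf_hom (r + p + j) (v j))"
  unfolding vec_hom_def parity_shift_def
  by (intro all_cong1 sf_hom_cong) (auto simp: even_add)

lemma kequiv_parity_shift: "kequiv (parity_shift p, act) (parity_shift q, act)"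
proof -
  have "vec_hom (parity_shift q) (r + (p + q)) v" if "vec_hom (parity_shift p) r v" for r v
    unfolding vec_hom_parity_shift
  proof
    fix j
    have "sf_hom (r + p + j) (v j)"
      using that by (simp add: vec_hom_parity_shift)
    moreover have "even (r + (p + q) + q + j) = even (r + p + j)"
      by presburger
    ultimately show "sf_hom (r + (p + q) + q + j) (v j)"
      by (metis sf_hom_cong)
  qed
  then have "kiso id (p + q) (parity_shift p, act) (parity_shift q, act)"
    by (simp add: kiso_def)
  then show ?thesis
    unfolding kequiv_iff_kiso by blast
qed

section \<open>The triangular normal form of the action\<close>

definition coc :: "nat \<Rightarrow> sf \<Rightarrow> sf \<Rightarrow> sf" where
  "coc k F A = sf_mult ((sf_sigma ^^ k) A) ((sf_D ^^ (k + 2)) F)"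

lemma coc_explicit:
  "coc 1 F A = (fst A * pderiv (snd F), fst A * pderiv (pderiv (fst F)) - snd A * pderiv (snd F))"
  "coc 2 F A = (fst A * pderiv (pderiv (fst F)),
                fst A * pderiv (pderiv (snd F)) + snd A * pderiv (pderiv (fst F)))"
  "coc 3 F A = (fst A * pderiv (pderiv (snd F)),
                fst A * pderiv (pderiv (pderiv (fst F))) - snd A * pderiv (pderiv (snd F)))"
  by (simp_all add: coc_def eval_nat_numeral sf_defs)

lemmas coc_simps = coc_explicit coc_explicit(1)[unfolded One_nat_def]

definition tri_act :: "complex \<Rightarrow> complex \<Rightarrow> complex \<Rightarrow> complex \<Rightarrow> complex \<Rightarrow> sf \<Rightarrow> vec \<Rightarrow> vec" where
  "tri_act n A B C X F v = (\<lambda>j.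
     if j = 0 then Ldens n F (v 0)
     else if j = 1 then sf_add (Ldens (n + 1/2) F (v 1)) (sf_scale A (coc 1 F (v 0)))
     else if j = 2 then sf_add (Ldens (n + 1) F (v 2))
       (sf_add (sf_scale B (coc 1 F (v 1))) (sf_scale (2*A*B) (coc 2 F (v 0))))
     else if j = 3 then sf_add (Ldens (n + 3/2) F (v 3))
       (sf_add (sf_scale C (coc 1 F (v 2)))
         (sf_add (sf_scale (2*B*C) (coc 2 F (v 1))) (sf_scale X (coc 3 F (v 0)))))
     else sf_zero)"

lemma kmod_closed_tri_act [simp]: "kmod_closed (e, tri_act n A B C X)"
  by (simp add: kmod_closed_def V4_def tri_act_def)

lemma tri_act_split:
  "tri_act n 0 0 0 0 F v j = (if j < 4 then Ldens (n + of_nat j / 2) F (v j) else sf_zero)"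
proof -
  consider "j = 0" | "j = 1" | "j = 2" | "j = 3" | "4 \<le> j" by linarith
  then show ?thesis
    by cases (simp_all add: tri_act_def coc_simps sf_defs prod_eq_iff)
qed

lemma Dsum4_eq_tri_act: "Dsum4 (\<lambda>j. n + of_nat j / 2) e = (e, tri_act n 0 0 0 0)"
  by (simp add: Dsum4_def tri_act_split fun_eq_iff)

lemma SQ4_eq: "SQ4 lam mu k p = (parity_shift p, SQact lam mu k p)"
  by (simp add: SQ4_def parity_shift_def)

lemma gchoose_2: "(a::complex) gchoose 2 = a*(a-1)/2"
  by (simp add: gbinomial_prod_rev numeral_2_eq_2)

lemma funpow_2: "(f ^^ 2) G = f (f G)"
  by (simp add: numeral_2_eq_2)

lemma upt_explicit:
  "[0..<1] = [0]" "[0..<2] = [0,1]" "[0..<3] = [0,1,2]" "[0..<4] = [0,1,2,3]"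
  "[0..<5] = [0,1,2,3,4]" "[0..<6] = [0,1,2,3,4,5]"
  by (simp_all add: upt_rec)

lemmas symbol_calculus_simps = SQact_def SQraw_def Let_def vadd_def sym_comp_def cbar_def Lsym_def
  gchoose_2 funpow_2 upt_explicit

lemma SQact_ge4: "4 \<le> j \<Longrightarrow> SQact lam mu k p F T j = sf_zero"
  by (simp add: SQact_def SQraw_def Let_def vadd_def sf_defs)

lemma SQ4_eq_tri_act:
  assumes "\<And>F T j. j < 4 \<Longrightarrow> SQact lam mu k p F T j = tri_act n A B C X F T j"
  shows "SQ4 lam mu k p = (parity_shift p, tri_act n A B C X)"
proof -
  have "SQact lam mu k p F T j = tri_act n A B C X F T j" for F T j
    using assms[of j F T] by (cases "j < 4") (simp_all add: SQact_ge4 tri_act_def)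
  then show ?thesis by (simp add: SQ4_eq fun_eq_iff)
qed

lemma SQ4_0_eq:
  "SQ4 lam mu (mu - lam - n) 0 = (parity_shift 0,
     tri_act n ((mu - lam - n)/2) ((mu + lam - n - 1)/2) ((mu - lam - n - 1)/2)
       (-(mu - lam - n) * (mu - lam - n - 1)/4))"
proof (rule SQ4_eq_tri_act)
  fix F T and j :: nat
  assume "j < 4"
  then consider "j = 0" | "j = 1" | "j = 2" | "j = 3" by linarith
  then show "SQact lam mu (mu - lam - n) 0 F T j = tri_act n ((mu - lam - n)/2) ((mu + lam - n - 1)/2)
      ((mu - lam - n - 1)/2) (-(mu - lam - n) * (mu - lam - n - 1)/4) F T j"
    by cases (simp_all add: tri_act_def coc_simps symbol_calculus_simps, simp_all add: sf_pderiv_simps,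
      simp_all add: poly_eq_poly_eq_iff[symmetric] fun_eq_iff, simp_all add: field_simps)
qed

lemma SQ4_1_eq:
  "SQ4 lam mu (mu - lam - n) 1 = (parity_shift 1,
     tri_act n ((mu + lam - n - 1/2)/2) ((mu - lam - n - 1/2)/2) ((mu + lam - n - 3/2)/2)
       (-(mu - lam - n - 1/2) * (mu + 3*lam - n - 3/2)/4))"
proof (rule SQ4_eq_tri_act)
  fix F T and j :: nat
  assume "j < 4"
  then consider "j = 0" | "j = 1" | "j = 2" | "j = 3" by linarith
  then show "SQact lam mu (mu - lam - n) 1 F T j = tri_act n ((mu + lam - n - 1/2)/2)
      ((mu - lam - n - 1/2)/2) ((mu + lam - n - 3/2)/2)
      (-(mu - lam - n - 1/2) * (mu + 3*lam - n - 3/2)/4) F T j"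
    by cases (simp_all add: tri_act_def coc_simps symbol_calculus_simps, simp_all add: sf_pderiv_simps,
      simp_all add: poly_eq_poly_eq_iff[symmetric] fun_eq_iff, simp_all add: field_simps)
qed

section \<open>Removing the adjacent cocycles\<close>

(* The coefficients of D^2 and D^3 are those for which the conjugated action is again of the form
  tri_act. *)
definition gauge :: "complex \<Rightarrow> complex \<Rightarrow> complex \<Rightarrow> complex \<Rightarrow> vec \<Rightarrow> vec" where
  "gauge n a b c v = (\<lambda>j.
     if j = 0 then v 0
     else if j = 1 then sf_add (v 1) (sf_scale a (sf_D (v 0)))
     else if j = 2 then sf_add (v 2)
       (sf_add (sf_scale b (sf_D (v 1))) (sf_scale ((2*n+1)*a*b) (sf_dx (v 0))))
     else if j = 3 then sf_add (v 3)
       (sf_add (sf_scale c (sf_D (v 2)))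
         (sf_add (sf_scale (2*(n+1)*b*c) (sf_dx (v 1)))
           (sf_scale (2*(n+1)*a*b*c) (sf_D (sf_dx (v 0))))))
     else sf_zero)"

lemma gauge_intertwines:
  "gauge n a b c (tri_act n 0 0 0 (X - 2*n*(n+1)*a*b*c) F v)
     = tri_act n (n*a) ((n+1/2)*b) ((n+1)*c) X F (gauge n a b c v)"
proof -
  have "gauge n a b c (tri_act n 0 0 0 (X - 2*n*(n+1)*a*b*c) F v) j
          = tri_act n (n*a) ((n+1/2)*b) ((n+1)*c) X F (gauge n a b c v) j" for j
  proof -
    consider "j = 0" | "j = 1" | "j = 2" | "j = 3" | "4 \<le> j" by linarith
    then show ?thesis
      by cases (simp_all add: gauge_def tri_act_def coc_simps, simp_all add: sf_pderiv_simps,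
        simp_all add: poly_eq_poly_eq_iff[symmetric] fun_eq_iff, simp_all add: field_simps)
  qed
  then show ?thesis by (rule ext)
qed

lemma bij_betw_gauge: "bij_betw (gauge n a b c) V4 V4"
proof -
  define \<psi> :: "vec \<Rightarrow> vec" where "\<psi> w = (let
      u0 = w 0;
      u1 = sf_add (w 1) (sf_neg (sf_scale a (sf_D u0)));
      u2 = sf_add (w 2) (sf_neg (sf_add (sf_scale b (sf_D u1)) (sf_scale ((2*n+1)*a*b) (sf_dx u0))));
      u3 = sf_add (w 3) (sf_neg (sf_add (sf_scale c (sf_D u2))
             (sf_add (sf_scale (2*(n+1)*b*c) (sf_dx u1)) (sf_scale (2*(n+1)*a*b*c) (sf_D (sf_dx u0))))))
    in (\<lambda>j. if j = 0 then u0 else if j = 1 then u1 else if j = 2 then u2 else if j = 3 then u3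
             else sf_zero))" for w
  show ?thesis
    by (rule bij_betw_byWitness[where f' = \<psi>])
      (auto simp: \<psi>_def gauge_def V4_def Let_def fun_eq_iff sf_add_neg_cancel)
qed

lemma gauge_vadd: "gauge n a b c (vadd u v) = vadd (gauge n a b c u) (gauge n a b c v)"
  by (rule ext) (simp add: gauge_def vadd_def sf_defs prod_eq_iff pderiv_add algebra_simps
      smult_add_right)

lemma gauge_vscale: "gauge n a b c (vscale t v) = vscale t (gauge n a b c v)"
  by (rule ext) (simp add: gauge_def vscale_def sf_defs prod_eq_iff pderiv_smult algebra_simps
      smult_add_right)

lemma vec_hom_gauge:
  assumes "vec_hom (parity_shift p) r v"
  shows "vec_hom (parity_shift p) r (gauge n a b c v)"
proof -
  have h: "sf_hom (r + p + j) (v j)" for j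
    using assms by (simp add: vec_hom_parity_shift)
  have "sf_hom (r + p + j) (gauge n a b c v j)" for j
    using h[of 0] h[of 1] h[of 2] h[of 3]
    by (cases "even (r + p)") (auto simp: gauge_def sf_hom_def sf_defs)
  then show ?thesis by (simp add: vec_hom_parity_shift)
qed

lemma kequiv_tri_act_gauge:
  assumes "n \<noteq> 0" "2*n + 1 \<noteq> 0" "n + 1 \<noteq> 0"
  shows "kequiv (parity_shift p, tri_act n 0 0 0 (X - 4*A*B*C/(2*n + 1)))
                (parity_shift p, tri_act n A B C X)"
proof -
  have "n + 1/2 \<noteq> 0"
    using assms(2) by (auto simp: field_simps)
  define a b c where "a = A/n" and "b = B/(n + 1/2)" and "c = C/(n + 1)"
  have abc: "n*a = A" "(n + 1/2)*b = B" "(n + 1)*c = C"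
    using assms \<open>n + 1/2 \<noteq> 0\<close> by (simp_all add: a_def b_def c_def)
  have "2*n*(n + 1)*a*b*c = 2*(n*a)*((n + 1)*c)*b"
    by simp
  also have "\<dots> = 2*A*C*(B/(n + 1/2))"
    by (simp only: abc(1,3) b_def)
  also have "\<dots> = 4*A*B*C/(2*n + 1)"
    using \<open>n + 1/2 \<noteq> 0\<close> by (simp add: field_simps)
  finally have "2*n*(n + 1)*a*b*c = 4*A*B*C/(2*n + 1)" .
  with abc have "kiso (gauge n a b c) 0 (parity_shift p, tri_act n 0 0 0 (X - 4*A*B*C/(2*n + 1)))
               (parity_shift p, tri_act n A B C X)"
    unfolding kiso_def using gauge_intertwines[of n a b c X]
    by (simp add: bij_betw_gauge gauge_vadd gauge_vscale vec_hom_gauge)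
  then show ?thesis
    unfolding kequiv_iff_kiso by blast
qed

lemma kequiv_tri_act_rescale:
  assumes "c \<noteq> 0"
  shows "kequiv (e, tri_act n 0 0 0 (c * t)) (e, tri_act n 0 0 0 t)"
proof -
  let ?\<phi> = "\<lambda>v. v(0 := sf_scale c (v 0))"
  have "bij_betw ?\<phi> V4 V4"
    by (rule bij_betw_byWitness[where f' = "\<lambda>v. v(0 := sf_scale (1/c) (v 0))"])
      (auto simp: V4_def sf_scale_scale sf_scale_1 assms)
  moreover have "?\<phi> (tri_act n 0 0 0 (c * t) F v) = tri_act n 0 0 0 t F (?\<phi> v)" for F v
    by (rule ext) (simp add: tri_act_def coc_simps sf_pderiv_simps poly_eq_poly_eq_iff[symmetric]
        fun_eq_iff field_simps)
  moreover have "vec_hom e r (?\<phi> v)" if "vec_hom e r v" for r v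
    using that by (auto simp: vec_hom_def sf_hom_def sf_defs)
  ultimately have "kiso ?\<phi> 0 (e, tri_act n 0 0 0 (c * t)) (e, tri_act n 0 0 0 t)"
    unfolding kiso_def
    by (simp add: vadd_def vscale_def fun_eq_iff sf_defs smult_add_right mult.commute)
  then show ?thesis
    unfolding kequiv_iff_kiso by blast
qed

lemma kequiv_tri_act_normal_form:
  assumes "n \<noteq> 0" "2*n + 1 \<noteq> 0" "n + 1 \<noteq> 0" "c \<noteq> 0"
    and "t = c * ((2*n + 1)*X - 4*A*B*C)"
  shows "kequiv (parity_shift p, tri_act n 0 0 0 t) (parity_shift p, tri_act n A B C X)"
proof -
  have "t = (c * (2*n + 1)) * (X - 4*A*B*C/(2*n + 1))"
    unfolding assms(5) using assms(2) by (simp add: field_simps)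
  then have "kequiv (parity_shift p, tri_act n 0 0 0 t)
                    (parity_shift p, tri_act n 0 0 0 (X - 4*A*B*C/(2*n + 1)))"
    using kequiv_tri_act_rescale assms(2,4) by simp
  then show ?thesis
    using kequiv_tri_act_gauge[OF assms(1-3)] kequiv_trans by blast
qed

section \<open>The split and the non-split module\<close>

definition const_one :: vec where
  "const_one = (\<lambda>j. if j = 0 then (1, 0) else sf_zero)"

(* On 1 in F_n, X_(x^3) acts as 3n x^2 and X_(x^2) X_(x^2) as 2n(2n+1) x^2, so this combination
  of the two annihilates it. *)
definition weight_relation :: "complex \<Rightarrow> (sf \<Rightarrow> vec \<Rightarrow> vec) \<Rightarrow> vec \<Rightarrow> vec" where
  "weight_relation n act v =
     vadd (vscale (2*n*(2*n + 1)) (act ([:0, 0, 0, 1:], 0) v))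
          (vscale (-3*n) (act ([:0, 0, 1:], 0) (act ([:0, 0, 1:], 0) v)))"

lemma const_one_V4: "const_one \<in> V4"
  by (simp add: V4_def const_one_def)

lemma tri_act_const_one:
  "tri_act n 0 0 0 t (1, 0) const_one = zvec"
  "tri_act n 0 0 0 t ([:0, 1:], 0) const_one = vscale n const_one"
  by (simp_all add: fun_eq_iff tri_act_def const_one_def zvec_def vscale_def coc_simps sf_defs
      pderiv_pCons)

lemma weight_relation_split: "weight_relation n (tri_act n 0 0 0 0) (vscale k const_one) = zvec"
  by (simp add: fun_eq_iff weight_relation_def tri_act_def const_one_def zvec_def vscale_def
      vadd_def sf_defs pderiv_pCons algebra_simps)

lemma weight_relation_nonsplit:
  assumes "n \<noteq> 0" "2*n + 1 \<noteq> 0" "t \<noteq> 0"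
  shows "weight_relation n (tri_act n 0 0 0 t) const_one \<noteq> zvec"
proof
  have "snd (weight_relation n (tri_act n 0 0 0 t) const_one 3) = [:12*n*(2*n + 1)*t:]"
    by (simp add: weight_relation_def tri_act_def const_one_def vscale_def vadd_def coc_simps
        sf_defs pderiv_pCons algebra_simps)
  moreover assume "weight_relation n (tri_act n 0 0 0 t) const_one = zvec"
  ultimately show False
    using assms by (simp add: zvec_def sf_zero_def)
qed

lemma lowest_weight_vectors_split:
  assumes w: "w \<in> V4" and one: "tri_act n 0 0 0 0 (1, 0) w = zvec"
    and x: "tri_act n 0 0 0 0 ([:0, 1:], 0) w = vscale n w"
  shows "\<exists>k. w = vscale k const_one"
proof -
  have const: "pderiv (fst (w j)) = 0" "pderiv (snd (w j)) = 0" if "j < 4" for j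
    using fun_cong[OF one, of j] that by (simp_all add: tri_act_split zvec_def sf_defs)
  have weight: "smult (of_nat j / 2) (fst (w j)) = 0" "smult (1/2 + of_nat j / 2) (snd (w j)) = 0"
    if "j < 4" for j
    using fun_cong[OF x, of j] that const[OF that]
    by (simp_all add: tri_act_split vscale_def sf_defs pderiv_pCons smult_add_left prod_eq_iff)
  have "1/2 + of_nat j / 2 \<noteq> (0::complex)" for j
  proof
    assume "1/2 + of_nat j / 2 = (0::complex)"
    then have "of_nat (Suc j) = (0::complex)"
      by (simp add: field_simps)
    then show False
      by (simp only: of_nat_eq_0_iff)
  qed
  then have snd0: "snd (w j) = 0" if "j < 4" for j
    using weight(2)[OF that] by simp
  have fst0: "fst (w j) = 0" if "j < 4" "j \<noteq> 0" for j
    using weight(1)[OF that(1)] that(2) by simp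
  obtain k where k: "fst (w 0) = [:k:]"
    using const(1)[of 0] pderiv_iszero by auto
  have "w = vscale k const_one"
  proof
    fix j
    show "w j = vscale k const_one j"
      using w k snd0 fst0
      by (cases "j < 4") (auto simp: V4_def vscale_def const_one_def sf_defs prod_eq_iff)
  qed
  then show ?thesis ..
qed

lemma weight_relation_V4:
  "kmod_closed (e, act) \<Longrightarrow> v \<in> V4 \<Longrightarrow> weight_relation n act v \<in> V4"
  unfolding weight_relation_def using kmod_closedD[of "(e, act)"]
  by (simp add: vadd_V4 vscale_V4)

lemma kiso_weight_relation:
  assumes f: "kiso f s (e, act) (e', act')" and closed: "kmod_closed (e, act)" and v: "v \<in> V4"
  shows "f (weight_relation n act v) = weight_relation n act' (f v)"
proof -
  have act_V4: "act F u \<in> V4" if "u \<in> V4" for F u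
    using kmod_closedD[OF closed that] by simp
  have f_act: "f (act F u) = act' F (f u)" if "u \<in> V4" for F u
    using kisoD(5)[OF f that] by simp
  show ?thesis
    unfolding weight_relation_def
    using v by (simp add: kisoD(2,3)[OF f] act_V4 vscale_V4 f_act)
qed

lemma not_kequiv_nonsplit_split:
  assumes "n \<noteq> 0" "2*n + 1 \<noteq> 0" "t \<noteq> 0"
  shows "\<not> kequiv (e, tri_act n 0 0 0 t) (e', tri_act n 0 0 0 0)"
proof
  assume "kequiv (e, tri_act n 0 0 0 t) (e', tri_act n 0 0 0 0)"
  then obtain f s where f: "kiso f s (e, tri_act n 0 0 0 t) (e', tri_act n 0 0 0 0)"
    unfolding kequiv_iff_kiso by blast
  have act: "f (tri_act n 0 0 0 t F v) = tri_act n 0 0 0 0 F (f v)" if "v \<in> V4" for F v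
    using kisoD(5)[OF f that] by simp
  define w where "w = f const_one"
  have "w \<in> V4"
    unfolding w_def by (rule kiso_V4[OF f const_one_V4])
  moreover have "tri_act n 0 0 0 0 (1, 0) w = zvec"
    using act[OF const_one_V4, of "(1, 0)"] kiso_zvec[OF f]
    by (simp add: w_def tri_act_const_one)
  moreover have "tri_act n 0 0 0 0 ([:0, 1:], 0) w = vscale n w"
    using act[OF const_one_V4, of "([:0, 1:], 0)"] kisoD(3)[OF f const_one_V4]
    by (simp add: w_def tri_act_const_one)
  ultimately obtain k where "w = vscale k const_one"
    using lowest_weight_vectors_split by blast
  have "f (weight_relation n (tri_act n 0 0 0 t) const_one)
          = weight_relation n (tri_act n 0 0 0 0) w"
    unfolding w_def by (rule kiso_weight_relation[OF f kmod_closed_tri_act const_one_V4])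
  also have "\<dots> = zvec"
    using \<open>w = vscale k const_one\<close> by (simp only: weight_relation_split)
  also have "\<dots> = f zvec"
    using kiso_zvec[OF f] by simp
  finally have "weight_relation n (tri_act n 0 0 0 t) const_one = zvec"
    using kisoD(1)[OF f] zvec_V4 weight_relation_V4[OF kmod_closed_tri_act const_one_V4]
    unfolding bij_betw_def by (blast dest: inj_onD)
  with weight_relation_nonsplit[OF assms] show False ..
qed

lemma kequiv_tri_act_iff:
  assumes "n \<noteq> 0" "2*n + 1 \<noteq> 0"
  shows "kequiv (parity_shift p, tri_act n 0 0 0 t) (parity_shift q, tri_act n 0 0 0 t')
           \<longleftrightarrow> (t = 0 \<longleftrightarrow> t' = 0)"
proof
  assume equiv: "kequiv (parity_shift p, tri_act n 0 0 0 t) (parity_shift q, tri_act n 0 0 0 t')"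
  show "t = 0 \<longleftrightarrow> t' = 0"
  proof (rule ccontr)
    assume "(t = 0) \<noteq> (t' = 0)"
    then consider "t \<noteq> 0" "t' = 0" | "t = 0" "t' \<noteq> 0" by blast
    then show False
    proof cases
      case 1
      then show False
        using equiv not_kequiv_nonsplit_split[OF assms] by blast
    next
      case 2
      then show False
        using kequiv_sym[OF equiv kmod_closed_tri_act] not_kequiv_nonsplit_split[OF assms] by blast
    qed
  qed
next
  assume zeros: "t = 0 \<longleftrightarrow> t' = 0"
  have "kequiv (parity_shift p, tri_act n 0 0 0 t) (parity_shift p, tri_act n 0 0 0 t')"
  proof (cases "t = 0")
    case True
    then show ?thesis using zeros by (simp add: kequiv_refl)
  next
    case False
    then have "t = (t / t') * t'" "t / t' \<noteq> 0"
      using zeros by simp_all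
    then show ?thesis
      using kequiv_tri_act_rescale by metis
  qed
  then show "kequiv (parity_shift p, tri_act n 0 0 0 t) (parity_shift q, tri_act n 0 0 0 t')"
    using kequiv_parity_shift kequiv_trans by blast
qed

lemma gamma_eq: "gamma lam mu = 3 * (lam + mu - 1/2)^2"
  by (simp add: gamma_def gamma_half_def power_mult_distrib flip: of_real_power)

lemma kequiv_SQ4_0_normal_form:
  assumes "n \<noteq> 0" "2*n + 1 \<noteq> 0" "n + 1 \<noteq> 0"
  shows "kequiv (parity_shift 0, tri_act n 0 0 0 (f0 n lam mu)) (SQ4 lam mu (mu - lam - n) 0)"
  unfolding SQ4_0_eq
  by (rule kequiv_tri_act_normal_form[OF assms, where c = "- 2 * complex_of_real (sqrt 3)"])
    (simp_all add: f0_def N4_def gamma_half_def field_simps)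

lemma kequiv_SQ4_1_normal_form:
  assumes "n \<noteq> 0" "2*n + 1 \<noteq> 0" "n + 1 \<noteq> 0"
  shows "kequiv (parity_shift 1, tri_act n 0 0 0 (f1 n lam mu)) (SQ4 lam mu (mu - lam - n) 1)"
  unfolding SQ4_1_eq
  by (rule kequiv_tri_act_normal_form[OF assms, where c = "- 6"])
    (simp_all add: f1_def N4_def gamma_eq field_simps power2_eq_square)

theorem proposition4p1:
  fixes n lam mu lam' mu' :: complex
  assumes "n \<noteq> 0" and "n \<noteq> -1/2" and "n \<noteq> -1"
  shows
    "(kequiv (SQ4 lam mu (mu - lam - n) 0) (SQ4 lam' mu' (mu' - lam' - n) 0)
        \<longleftrightarrow> (f0 n lam mu = 0 \<longleftrightarrow> f0 n lam' mu' = 0))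
     \<and> (kequiv (SQ4 lam mu (mu - lam - n) 0) (Dsum4 (\<lambda>j. n + of_nat j / 2) (\<lambda>j. j mod 2))
        \<longleftrightarrow> f0 n lam mu = 0)
     \<and> (kequiv (SQ4 lam mu (mu - lam - n) 1) (SQ4 lam' mu' (mu' - lam' - n) 1)
        \<longleftrightarrow> (f1 n lam mu = 0 \<longleftrightarrow> f1 n lam' mu' = 0))
     \<and> (kequiv (SQ4 lam mu (mu - lam - n) 1) (Dsum4 (\<lambda>j. n + of_nat j / 2) (\<lambda>j. (j + 1) mod 2))
        \<longleftrightarrow> f1 n lam mu = 0)
     \<and> (kequiv (SQ4 lam mu (mu - lam - n) 0) (SQ4 lam' mu' (mu' - lam' - n) 1)
        \<longleftrightarrow> (f0 n lam mu = 0 \<longleftrightarrow> f1 n lam' mu' = 0))"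
proof -
  have n: "2*n + 1 \<noteq> 0" "n + 1 \<noteq> 0"
    using assms(2,3) by (auto simp: field_simps add_eq_0_iff)
  note SQ0 = kequiv_SQ4_0_normal_form[OF assms(1) n]
    and SQ1 = kequiv_SQ4_1_normal_form[OF assms(1) n]
    and split = kequiv_refl[of "(parity_shift _, tri_act n 0 0 0 0)"]
  have Dsum: "Dsum4 (\<lambda>j. n + of_nat j / 2) (\<lambda>j. j mod 2) = (parity_shift 0, tri_act n 0 0 0 0)"
    "Dsum4 (\<lambda>j. n + of_nat j / 2) (\<lambda>j. (j + 1) mod 2) = (parity_shift 1, tri_act n 0 0 0 0)"
    by (simp_all add: Dsum4_eq_tri_act parity_shift_def add.commute)
  show ?thesis
    unfolding Dsum
    by (simp del: One_nat_def add: kequiv_transfer[OF SQ0 SQ0] kequiv_transfer[OF SQ1 SQ1]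
        kequiv_transfer[OF SQ0 SQ1] kequiv_transfer[OF SQ0 split]
        kequiv_transfer[OF SQ1 split] kequiv_tri_act_iff[OF assms(1) n(1)])
qed

end
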